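(* Let $\mathcal S$ be a subclass of a finite multi-algebra $\mathcal A=\mathcal A_1\times\cdots\times\mathcal A_m$ such that $\mathcal S=\mathcal S_1\times\cdots\times\mathcal S_m$. If for all distinct $i,j\in\{1,\dots,m\}$ and all $r\in\mathcal S_i$ we have $\Rsh_i^jr\in\mathcal S_j$, then $\mathcal S$ is $\Rsh$-closed.
   Context: A finite non-associative algebra is a tuple $(\mathcal A,\cup,\neg,\emptyset,\mathcal B,\diamond,\overline{\cdot},e)$ where $(\mathcal A,\cup,\neg,\emptyset,\mathcal B)$ is a finite Boolean algebra (with $x\cap y=\neg(\neg x\cup\neg y)$) and for all $x,y,z$: $\overline{\overline x}=x$, $\overline{x\cup y}=\overline x\cup\overline y$, $\overline{x\diamond y}=\overline y\diamond\overline x$, $e\diamond x=x\diamond e=x$, $x\diamond(y\cup z)=(x\diamond y)\cup(x\diamond z)$, $(x\diamond y)\cap\overline z=\emptyset\iff(y\diamond z)\cap\overline x=\emptyset$. A projection operator from $\mathcal A$ to $\mathcal A'$ is a map $\Rsh$ with $\Rsh(r\cup r')=\Rsh r\cup\Rsh r'$ and $\Rsh\overline r=\overline{\Rsh r}$. A finite multi-algebra is a product $\mathcal A_1\times\cdots\times\mathcal A_m$ of finite non-associative algebras with projection operators $\Rsh_i^j:\mathcal A_i\to\mathcal A_j$ for all distinct $i,j$; operations $\diamond,\cap,\overline{\cdot}$ on relations $R=(R_1,\dots,R_m)$ are componentwise. The projection closure $\Rsh R$ is obtained by repeatedly replacing $R_j$ by $R_j\cap\Rsh_i^jR_i$ (distinct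 $i,j$) until a fixed point. A subclass is a subset closed under $\diamond$, $\cap$ and converse; the $i$-th slice of $\mathcal S$ is $\mathcal S_i=\{R_i:R\in\mathcal S\}$; $\mathcal S$ is $\Rsh$-closed if $\Rsh R\in\mathcal S$ for all $R\in\mathcal S$. *)

theory Defs
  imports Main
begin

text \<open>A finite non-associative algebra, given by its carrier and operations:
  join (\<open>\<union>\<close>), negation (\<open>\<not>\<close>), bottom (\<open>\<emptyset>\<close>), top (\<open>\<B>\<close>),
  composition (\<open>\<diamond>\<close>), converse and the identity \<open>e\<close>.\<close>
record 'a nalg =
  carrier :: "'a set"
  join :: "'a \<Rightarrow> 'a \<Rightarrow> 'a"
  neg :: "'a \<Rightarrow> 'a"
  bot :: "'a"
  top :: "'a"
  comp :: "'a \<Rightarrow> 'a \<Rightarrow> 'a"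
  conv :: "'a \<Rightarrow> 'a"
  ident :: "'a"

definition meet :: "('a, 'b) nalg_scheme \<Rightarrow> 'a \<Rightarrow> 'a \<Rightarrow> 'a" where
  "meet A x y = neg A (join A (neg A x) (neg A y))"

definition finite_boolean_algebra :: "('a, 'b) nalg_scheme \<Rightarrow> bool" where
  "finite_boolean_algebra A \<longleftrightarrow>
     finite (carrier A) \<and> bot A \<in> carrier A \<and> top A \<in> carrier A \<and>
     (\<forall>x\<in>carrier A. neg A x \<in> carrier A) \<and>
     (\<forall>x\<in>carrier A. \<forall>y\<in>carrier A. join A x y \<in> carrier A) \<and>
     (\<forall>x\<in>carrier A. \<forall>y\<in>carrier A. join A x y = join A y x) \<and>
     (\<forall>x\<in>carrier A. \<forall>y\<in>carrier A. meet A x y = meet A y x) \<and>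
     (\<forall>x\<in>carrier A. \<forall>y\<in>carrier A. \<forall>z\<in>carrier A. join A (join A x y) z = join A x (join A y z)) \<and>
     (\<forall>x\<in>carrier A. \<forall>y\<in>carrier A. \<forall>z\<in>carrier A. meet A (meet A x y) z = meet A x (meet A y z)) \<and>
     (\<forall>x\<in>carrier A. \<forall>y\<in>carrier A. join A x (meet A x y) = x) \<and>
     (\<forall>x\<in>carrier A. \<forall>y\<in>carrier A. meet A x (join A x y) = x) \<and>
     (\<forall>x\<in>carrier A. \<forall>y\<in>carrier A. \<forall>z\<in>carrier A.
        join A x (meet A y z) = meet A (join A x y) (join A x z)) \<and>
     (\<forall>x\<in>carrier A. join A x (bot A) = x) \<and>
     (\<forall>x\<in>carrier A. meet A x (top A) = x) \<and>
     (\<forall>x\<in>carrier A. join A x (neg A x) = top A) \<and>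
     (\<forall>x\<in>carrier A. meet A x (neg A x) = bot A)"

definition finite_nalg :: "('a, 'b) nalg_scheme \<Rightarrow> bool" where
  "finite_nalg A \<longleftrightarrow>
     finite_boolean_algebra A \<and> ident A \<in> carrier A \<and>
     (\<forall>x\<in>carrier A. conv A x \<in> carrier A) \<and>
     (\<forall>x\<in>carrier A. \<forall>y\<in>carrier A. comp A x y \<in> carrier A) \<and>
     (\<forall>x\<in>carrier A. conv A (conv A x) = x) \<and>
     (\<forall>x\<in>carrier A. \<forall>y\<in>carrier A. conv A (join A x y) = join A (conv A x) (conv A y)) \<and>
     (\<forall>x\<in>carrier A. \<forall>y\<in>carrier A. conv A (comp A x y) = comp A (conv A y) (conv A x)) \<and>
     (\<forall>x\<in>carrier A. comp A (ident A) x = x \<and> comp A x (ident A) = x) \<and>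
     (\<forall>x\<in>carrier A. \<forall>y\<in>carrier A. \<forall>z\<in>carrier A.
        comp A x (join A y z) = join A (comp A x y) (comp A x z)) \<and>
     (\<forall>x\<in>carrier A. \<forall>y\<in>carrier A. \<forall>z\<in>carrier A.
        meet A (comp A x y) (conv A z) = bot A \<longleftrightarrow> meet A (comp A y z) (conv A x) = bot A)"

definition projection_op :: "('a, 'b) nalg_scheme \<Rightarrow> ('a, 'b) nalg_scheme \<Rightarrow> ('a \<Rightarrow> 'a) \<Rightarrow> bool" where
  "projection_op A A' P \<longleftrightarrow>
     (\<forall>r\<in>carrier A. P r \<in> carrier A') \<and>
     (\<forall>r\<in>carrier A. \<forall>r'\<in>carrier A. P (join A r r') = join A' (P r) (P r')) \<and>
     (\<forall>r\<in>carrier A. P (conv A r) = conv A' (P r))"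

text \<open>Relations are lists of length \<open>m\<close>.\<close>
definition multi_algebra :: "nat \<Rightarrow> (nat \<Rightarrow> ('a, 'b) nalg_scheme) \<Rightarrow> (nat \<Rightarrow> nat \<Rightarrow> 'a \<Rightarrow> 'a) \<Rightarrow> bool" where
  "multi_algebra m A P \<longleftrightarrow>
     (\<forall>i<m. finite_nalg (A i)) \<and>
     (\<forall>i<m. \<forall>j<m. i \<noteq> j \<longrightarrow> projection_op (A i) (A j) (P i j))"

definition relations :: "nat \<Rightarrow> (nat \<Rightarrow> ('a, 'b) nalg_scheme) \<Rightarrow> 'a list set" where
  "relations m A = {R. length R = m \<and> (\<forall>i<m. R ! i \<in> carrier (A i))}"

definition mcomp :: "(nat \<Rightarrow> ('a, 'b) nalg_scheme) \<Rightarrow> 'a list \<Rightarrow> 'a list \<Rightarrow> 'a list" where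
  "mcomp A R S = map (\<lambda>i. comp (A i) (R ! i) (S ! i)) [0..<length R]"

definition mmeet :: "(nat \<Rightarrow> ('a, 'b) nalg_scheme) \<Rightarrow> 'a list \<Rightarrow> 'a list \<Rightarrow> 'a list" where
  "mmeet A R S = map (\<lambda>i. meet (A i) (R ! i) (S ! i)) [0..<length R]"

definition mconv :: "(nat \<Rightarrow> ('a, 'b) nalg_scheme) \<Rightarrow> 'a list \<Rightarrow> 'a list" where
  "mconv A R = map (\<lambda>i. conv (A i) (R ! i)) [0..<length R]"

definition proj_step :: "nat \<Rightarrow> (nat \<Rightarrow> ('a, 'b) nalg_scheme) \<Rightarrow> (nat \<Rightarrow> nat \<Rightarrow> 'a \<Rightarrow> 'a)
    \<Rightarrow> 'a list \<Rightarrow> 'a list \<Rightarrow> bool" where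
  "proj_step m A P R R' \<longleftrightarrow>
     (\<exists>i<m. \<exists>j<m. i \<noteq> j \<and> R' = R[j := meet (A j) (R ! j) (P i j (R ! i))])"

definition is_proj_closure :: "nat \<Rightarrow> (nat \<Rightarrow> ('a, 'b) nalg_scheme) \<Rightarrow> (nat \<Rightarrow> nat \<Rightarrow> 'a \<Rightarrow> 'a)
    \<Rightarrow> 'a list \<Rightarrow> 'a list \<Rightarrow> bool" where
  "is_proj_closure m A P R R' \<longleftrightarrow>
     (proj_step m A P)\<^sup>*\<^sup>* R R' \<and>
     (\<forall>i<m. \<forall>j<m. i \<noteq> j \<longrightarrow> meet (A j) (R' ! j) (P i j (R' ! i)) = R' ! j)"

definition is_subclass :: "nat \<Rightarrow> (nat \<Rightarrow> ('a, 'b) nalg_scheme) \<Rightarrow> 'a list set \<Rightarrow> bool" where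
  "is_subclass m A S \<longleftrightarrow>
     S \<subseteq> relations m A \<and>
     (\<forall>R\<in>S. \<forall>R'\<in>S. mcomp A R R' \<in> S) \<and>
     (\<forall>R\<in>S. \<forall>R'\<in>S. mmeet A R R' \<in> S) \<and>
     (\<forall>R\<in>S. mconv A R \<in> S)"

definition slice :: "'a list set \<Rightarrow> nat \<Rightarrow> 'a set" where
  "slice S i = {R ! i | R. R \<in> S}"

definition proj_closed :: "nat \<Rightarrow> (nat \<Rightarrow> ('a, 'b) nalg_scheme) \<Rightarrow> (nat \<Rightarrow> nat \<Rightarrow> 'a \<Rightarrow> 'a)
    \<Rightarrow> 'a list set \<Rightarrow> bool" where
  "proj_closed m A P S \<longleftrightarrow>
     (\<forall>R\<in>S. \<forall>R'. is_proj_closure m A P R R' \<longrightarrow> R' \<in> S)"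

end

theory Submission
  imports Defs
begin

text \<open>A projection-closure step only changes one component \<open>R\<^sub>j\<close>, into \<open>R\<^sub>j \<inter> \<Rsh>\<^sub>i\<^sup>j R\<^sub>i\<close>.
  Both operands lie in the slice \<open>S\<^sub>j\<close>, which is closed under \<open>\<inter>\<close> because \<open>S\<close> is, so since
  \<open>S\<close> is the product of its slices the new relation is again in \<open>S\<close>; the closure is reached
  by finitely many such steps.\<close>

lemma mem_sliceI: "R \<in> S \<Longrightarrow> R ! i \<in> slice S i"
  unfolding slice_def by blast

lemma nth_mmeet: "i < length R \<Longrightarrow> mmeet A R Q ! i = meet (A i) (R ! i) (Q ! i)"
  unfolding mmeet_def by simp

lemma meet_mem_slice:
  assumes "is_subclass m A S" "j < m" "r \<in> slice S j" "s \<in> slice S j"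
  shows "meet (A j) r s \<in> slice S j"
proof -
  obtain R Q where RQ: "R \<in> S" "Q \<in> S" "r = R ! j" "s = Q ! j"
    using assms(3,4) unfolding slice_def by blast
  have "length R = m"
    using assms(1) RQ(1) unfolding is_subclass_def relations_def by blast
  moreover have "mmeet A R Q \<in> S"
    using assms(1) RQ(1,2) unfolding is_subclass_def by blast
  ultimately show ?thesis
    using mem_sliceI[of "mmeet A R Q" S j] nth_mmeet[of j R A Q] assms(2) RQ(3,4) by simp
qed

lemma list_update_mem_product:
  assumes S_product: "S = {R. length R = m \<and> (\<forall>i<m. R ! i \<in> slice S i)}"
    and "R \<in> S" "x \<in> slice S j"
  shows "R[j := x] \<in> S"
proof -
  have "length R = m" "\<forall>i<m. R ! i \<in> slice S i"
    using assms(2) S_product by blast+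
  then have "length (R[j := x]) = m \<and> (\<forall>i<m. R[j := x] ! i \<in> slice S i)"
    using assms(3) by (metis length_list_update nth_list_update_eq nth_list_update_neq)
  then show ?thesis
    using S_product by blast
qed

lemma proj_step_preserves_product_class:
  assumes S_subclass: "is_subclass m A S"
    and S_product: "S = {R. length R = m \<and> (\<forall>i<m. R ! i \<in> slice S i)}"
    and slices_proj: "\<forall>i<m. \<forall>j<m. i \<noteq> j \<longrightarrow> (\<forall>r\<in>slice S i. P i j r \<in> slice S j)"
    and "R \<in> S" "proj_step m A P R R'"
  shows "R' \<in> S"
proof -
  obtain i j where ij: "i < m" "j < m" "i \<noteq> j"
    and R': "R' = R[j := meet (A j) (R ! j) (P i j (R ! i))]"
    using assms(5) unfolding proj_step_def by blast
  have "P i j (R ! i) \<in> slice S j"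
    using slices_proj ij mem_sliceI[OF assms(4)] by blast
  then have "meet (A j) (R ! j) (P i j (R ! i)) \<in> slice S j"
    using meet_mem_slice[OF S_subclass ij(2)] mem_sliceI[OF assms(4)] by blast
  then show ?thesis
    unfolding R' using list_update_mem_product[OF S_product assms(4)] by blast
qed

lemma proj_closed_if_proj_step_preserves:
  assumes "\<And>R R'. R \<in> S \<Longrightarrow> proj_step m A P R R' \<Longrightarrow> R' \<in> S"
  shows "proj_closed m A P S"
  unfolding proj_closed_def is_proj_closure_def
proof (intro ballI allI impI)
  fix R R'
  assume "R \<in> S" and "(proj_step m A P)\<^sup>*\<^sup>* R R' \<and>
    (\<forall>i<m. \<forall>j<m. i \<noteq> j \<longrightarrow> meet (A j) (R' ! j) (P i j (R' ! i)) = R' ! j)"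
  then have "(proj_step m A P)\<^sup>*\<^sup>* R R'"
    by blast
  then show "R' \<in> S"
    using \<open>R \<in> S\<close> by (induction rule: rtranclp_induct) (auto intro: assms)
qed

theorem proposition6p5:
  fixes m :: nat
    and A :: "nat \<Rightarrow> ('a, 'b) nalg_scheme"
    and P :: "nat \<Rightarrow> nat \<Rightarrow> 'a \<Rightarrow> 'a"
    and S :: "'a list set"
  assumes "multi_algebra m A P"
    and "is_subclass m A S"
    and "S = {R. length R = m \<and> (\<forall>i<m. R ! i \<in> slice S i)}"
    and "\<forall>i<m. \<forall>j<m. i \<noteq> j \<longrightarrow> (\<forall>r\<in>slice S i. P i j r \<in> slice S j)"
  shows "proj_closed m A P S"
  using proj_step_preserves_product_class[OF assms(2-4)]
  by (rule proj_closed_if_proj_step_preserves)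

end
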